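(* There is an absolute constant $c>0$ such that for all integers $n>f\ge 1$ there exists an $n$-vertex graph $G^*=(V,E)$ such that every $f$-EFD connectivity certificate $H$ of $G^*$ has at least $c\, f n \log(n/f)$ edges.
   Context: For a graph $G=(V,E)$ and a set of edges $F\subseteq E$, $\deg(F)$ denotes the maximum over vertices $x$ of the number of edges of $F$ incident to $x$. A subgraph $H\subseteq G$ (on the same vertex set) is an $f$-EFD connectivity certificate of $G$ if for every $F\subseteq E$ with $\deg(F)\le f$ and every pair $u,v\in V$, $u$ and $v$ are connected in $H-F$ if and only if they are connected in $G-F$ (where $G-F$ is $G$ with the edges of $F$ removed). *)

theory Defs
  imports Complex_Main
begin

definition simple_graph :: "'a set \<Rightarrow> 'a set set \<Rightarrow> bool" where
  "simple_graph V E \<longleftrightarrow> finite V \<and> (\<forall>e\<in>E. e \<subseteq> V \<and> card e = 2)"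

definition connected_in :: "'a set set \<Rightarrow> 'a \<Rightarrow> 'a \<Rightarrow> bool" where
  "connected_in E u v \<longleftrightarrow> (u, v) \<in> {(x, y). {x, y} \<in> E}\<^sup>*"

definition deg_le :: "'a set set \<Rightarrow> nat \<Rightarrow> bool" where
  "deg_le F f \<longleftrightarrow> (\<forall>x. card {e\<in>F. x \<in> e} \<le> f)"

definition EFD_certificate :: "nat \<Rightarrow> 'a set \<Rightarrow> 'a set set \<Rightarrow> 'a set set \<Rightarrow> bool" where
  "EFD_certificate f V E H \<longleftrightarrow> H \<subseteq> E \<and>
     (\<forall>F\<subseteq>E. deg_le F f \<longrightarrow> (\<forall>u\<in>V. \<forall>v\<in>V.
        connected_in (H - F) u v \<longleftrightarrow> connected_in (E - F) u v))"

end

theory Submission imports Defs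
begin

text \<open>Replace every vertex of the \<open>d\<close>-dimensional hypercube by \<open>g \<le> f\<close> copies and every
  hypercube edge by the complete bipartite graph between the two groups of copies. An edge \<open>uv\<close>
  of this graph lies in every \<open>f\<close>-EFD certificate: \<open>u\<close> and \<open>v\<close> differ in some coordinate \<open>i\<close>,
  and deleting all other edges across the coordinate-\<open>i\<close> cut is a fault set of degree at most
  \<open>g \<le> f\<close> after which \<open>uv\<close> is the only edge joining the two sides. So the certificate is the
  whole graph, which has \<open>d 2^(d-1) g^2\<close> edges; taking \<open>g = f\<close> and \<open>2^d \<approx> n/f\<close> (or \<open>d = 1\<close> and
  \<open>g = n/2\<close> when \<open>2f > n\<close>) gives \<open>\<Omega>(f n log(n/f))\<close>.\<close>

definition cut_edges :: "'a set \<Rightarrow> 'a set set \<Rightarrow> 'a set set" where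
  "cut_edges S E = {e \<in> E. e \<inter> S \<noteq> {} \<and> e - S \<noteq> {}}"

lemma doubleton_in_cut_edges_iff:
  "{p, q} \<in> cut_edges S E \<longleftrightarrow> {p, q} \<in> E \<and> (p \<in> S \<longleftrightarrow> q \<notin> S)"
  by (auto simp: cut_edges_def)

lemma connected_in_stays_inside:
  assumes "connected_in E u v" "u \<in> S" "cut_edges S E = {}"
  shows "v \<in> S"
proof -
  have "(u, v) \<in> {(x, y). {x, y} \<in> E}\<^sup>*"
    using assms(1) unfolding connected_in_def .
  then show ?thesis
    using assms(2)
  proof (induction rule: rtrancl_induct)
    case (step y z)
    then show ?case
      using assms(3) doubleton_in_cut_edges_iff[of y z S E] by auto
  qed
qed

lemma deg_le_mono:
  assumes "finite F'" "F \<subseteq> F'" "deg_le F' g" "g \<le> f"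
  shows "deg_le F f"
  unfolding deg_le_def
proof
  fix x
  have "card {e \<in> F. x \<in> e} \<le> card {e \<in> F'. x \<in> e}"
    using assms(1,2) by (intro card_mono) auto
  also have "\<dots> \<le> g"
    using assms(3) unfolding deg_le_def by blast
  finally show "card {e \<in> F. x \<in> e} \<le> f"
    using assms(4) by simp
qed

lemma simple_graph_finite_edges:
  assumes "simple_graph V E"
  shows "finite E"
proof (rule finite_subset)
  show "E \<subseteq> Pow V" "finite (Pow V)"
    using assms unfolding simple_graph_def by auto
qed

lemma sum_degree_eq_twice_card_edges:
  assumes "simple_graph V E"
  shows "(\<Sum>v\<in>V. card {e \<in> E. v \<in> e}) = 2 * card E"
proof (rule sum_multicount)
  show "finite V"
    using assms unfolding simple_graph_def by blast
  show "finite E"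
    using assms by (rule simple_graph_finite_edges)
  show "\<forall>e\<in>E. card {v \<in> V. v \<in> e} = 2"
  proof
    fix e assume "e \<in> E"
    then have "{v \<in> V. v \<in> e} = e" "card e = 2"
      using assms unfolding simple_graph_def by auto
    then show "card {v \<in> V. v \<in> e} = 2" by simp
  qed
qed

lemma EFD_certificate_contains_edge:
  assumes cert: "EFD_certificate f V E H"
    and "u \<in> V" "v \<in> V" "{u, v} \<in> E" "u \<in> S" "v \<notin> S"
    and deg: "deg_le (cut_edges S E - {{u, v}}) f"
  shows "{u, v} \<in> H"
proof (rule ccontr)
  assume not_in_H: "{u, v} \<notin> H"
  define F where "F = cut_edges S E - {{u, v}}"
  have "H \<subseteq> E" and preserves: "\<forall>F\<subseteq>E. deg_le F f \<longrightarrow> (\<forall>u\<in>V. \<forall>v\<in>V.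
      connected_in (H - F) u v \<longleftrightarrow> connected_in (E - F) u v)"
    using cert unfolding EFD_certificate_def by auto
  have "F \<subseteq> E" unfolding F_def cut_edges_def by blast
  have "connected_in (E - F) u v"
    using \<open>{u, v} \<in> E\<close> unfolding connected_in_def F_def by auto
  then have connected: "connected_in (H - F) u v"
    using preserves \<open>F \<subseteq> E\<close> deg[folded F_def] \<open>u \<in> V\<close> \<open>v \<in> V\<close> by blast
  have no_cut: "cut_edges S (H - F) = {}"
    using \<open>H \<subseteq> E\<close> not_in_H unfolding F_def cut_edges_def by blast
  have "v \<in> S"
    using connected_in_stays_inside[OF connected \<open>u \<in> S\<close> no_cut] .
  then show False
    using \<open>v \<notin> S\<close> by simp
qed

lemma mult_add_eq_mult_add_iff:
  fixes a b g x y :: nat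
  assumes "a < g" "b < g"
  shows "x * g + a = y * g + b \<longleftrightarrow> x = y \<and> a = b"
proof
  assume eq: "x * g + a = y * g + b"
  have "(x * g + a) div g = x" "(x * g + a) mod g = a" "(y * g + b) div g = y" "(y * g + b) mod g = b"
    using assms by simp_all
  then show "x = y \<and> a = b" using eq by metis
qed simp

lemma mult_add_less_mult:
  fixes a g x m :: nat
  assumes "x < m" "a < g"
  shows "x * g + a < m * g"
proof -
  have "x * g + a < Suc x * g" using assms(2) by simp
  also have "\<dots> \<le> m * g" using assms(1) by (intro mult_right_mono) auto
  finally show ?thesis .
qed

lemma flip_bit_flip_bit: "flip_bit i (flip_bit i x) = (x :: nat)"
  by (rule bit_eqI) (auto simp: bit_flip_bit_iff)

lemma flip_bit_neq: "flip_bit i x \<noteq> (x :: nat)"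
proof
  assume "flip_bit i x = x"
  then have "bit (flip_bit i x) i = bit x i" by simp
  then show False by (simp add: bit_flip_bit_iff)
qed

lemma flip_bit_eq_flip_bit_iff: "flip_bit i x = flip_bit j (x :: nat) \<longleftrightarrow> i = j"
proof
  assume eq: "flip_bit i x = flip_bit j x"
  show "i = j"
  proof (rule ccontr)
    assume "i \<noteq> j"
    moreover have "bit (flip_bit i x) i = bit (flip_bit j x) i" using eq by simp
    ultimately show False by (simp add: bit_flip_bit_iff)
  qed
qed simp

lemma flip_bit_less_power:
  "(x :: nat) < 2 ^ d \<Longrightarrow> i < d \<Longrightarrow> flip_bit i x < 2 ^ d"
proof -
  assume "x < 2 ^ d" "i < d"
  then have "flip_bit i x = take_bit d (flip_bit i x)"
    by (simp add: take_bit_flip_bit_eq take_bit_nat_eq_self)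
  then show "flip_bit i x < 2 ^ d"
    by (metis take_bit_nat_less_exp)
qed

text \<open>Vertex \<open>x * g + a\<close> is copy \<open>a\<close> of the hypercube vertex \<open>x\<close>, a bit vector of length \<open>d\<close>.\<close>
definition blown_up_cube :: "nat \<Rightarrow> nat \<Rightarrow> nat set set" where
  "blown_up_cube g d = {{x * g + a, flip_bit i x * g + b} | x a b i.
     x < 2 ^ d \<and> a < g \<and> b < g \<and> i < d}"

lemma blown_up_cube_simple:
  assumes "2 ^ d * g \<le> n"
  shows "simple_graph {0..<n} (blown_up_cube g d)"
  unfolding simple_graph_def
proof safe
  fix e assume "e \<in> blown_up_cube g d"
  then obtain x a b i where e: "e = {x * g + a, flip_bit i x * g + b}"
    and x: "x < 2 ^ d" and "a < g" "b < g" "i < d"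
    unfolding blown_up_cube_def by blast
  have "x * g + a < n" "flip_bit i x * g + b < n"
    using mult_add_less_mult[OF x \<open>a < g\<close>]
      mult_add_less_mult[OF flip_bit_less_power[OF x \<open>i < d\<close>] \<open>b < g\<close>] assms
    by linarith+
  moreover have "x * g + a \<noteq> flip_bit i x * g + b"
    using mult_add_eq_mult_add_iff[OF \<open>a < g\<close> \<open>b < g\<close>] flip_bit_neq by metis
  ultimately show "card e = 2" "\<And>y. y \<in> e \<Longrightarrow> y \<in> {0..<n}"
    using e by auto
qed

lemma finite_blown_up_cube: "finite (blown_up_cube g d)"
  using blown_up_cube_simple[OF order.refl] by (rule simple_graph_finite_edges)

lemma blown_up_cube_edges_at:
  assumes "w < 2 ^ d * g"
  shows "{e \<in> blown_up_cube g d. w \<in> e} =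
    (\<lambda>(i, b). {w, flip_bit i (w div g) * g + b}) ` ({..<d} \<times> {..<g})"
proof (intro equalityI subsetI)
  fix e assume "e \<in> {e \<in> blown_up_cube g d. w \<in> e}"
  then obtain x a b i where e: "e = {x * g + a, flip_bit i x * g + b}" and "w \<in> e"
    and "a < g" "b < g" "i < d"
    unfolding blown_up_cube_def by blast
  then consider "w = x * g + a" | "w = flip_bit i x * g + b" by blast
  then show "e \<in> (\<lambda>(i, b). {w, flip_bit i (w div g) * g + b}) ` ({..<d} \<times> {..<g})"
  proof cases
    case 1
    then have "e = {w, flip_bit i (w div g) * g + b}" using e \<open>a < g\<close> by simp
    then show ?thesis using \<open>b < g\<close> \<open>i < d\<close> by force
  next
    case 2
    then have "e = {w, flip_bit i (w div g) * g + a}"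
      using e \<open>b < g\<close> by (simp add: flip_bit_flip_bit insert_commute)
    then show ?thesis using \<open>a < g\<close> \<open>i < d\<close> by force
  qed
next
  fix e assume "e \<in> (\<lambda>(i, b). {w, flip_bit i (w div g) * g + b}) ` ({..<d} \<times> {..<g})"
  then obtain i b where e: "e = {w, flip_bit i (w div g) * g + b}" and "i < d" "b < g"
    by auto
  have "g > 0"
    using assms by (cases "g = 0") auto
  then have "w div g < 2 ^ d" "w mod g < g"
    using assms by (simp_all add: less_mult_imp_div_less)
  moreover have "e = {w div g * g + w mod g, flip_bit i (w div g) * g + b}"
    using e by simp
  ultimately have "e \<in> blown_up_cube g d"
    using \<open>i < d\<close> \<open>b < g\<close> unfolding blown_up_cube_def by blast
  then show "e \<in> {e \<in> blown_up_cube g d. w \<in> e}"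
    using e by simp
qed

lemma card_blown_up_cube_edges_at:
  assumes "w < 2 ^ d * g"
  shows "card {e \<in> blown_up_cube g d. w \<in> e} = d * g"
proof -
  have "inj_on (\<lambda>(i, b). {w, flip_bit i (w div g) * g + b}) ({..<d} \<times> {..<g})"
  proof (rule inj_onI, clarsimp)
    fix i b j c
    assume "b < g" "c < g"
      and eq: "{w, flip_bit i (w div g) * g + b} = {w, flip_bit j (w div g) * g + c}"
    have w: "w = w div g * g + w mod g" and "w mod g < g"
      using \<open>b < g\<close> by simp_all
    have "flip_bit k (w div g) * g + a \<noteq> w" if "a < g" for k a
      using mult_add_eq_mult_add_iff[OF that \<open>w mod g < g\<close>] flip_bit_neq w by metis
    then have "flip_bit i (w div g) * g + b = flip_bit j (w div g) * g + c"
      using eq \<open>b < g\<close> by (auto simp: doubleton_eq_iff)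
    then have "flip_bit i (w div g) = flip_bit j (w div g)" "b = c"
      using mult_add_eq_mult_add_iff[OF \<open>b < g\<close> \<open>c < g\<close>] by simp_all
    then show "i = j \<and> b = c"
      by (simp add: flip_bit_eq_flip_bit_iff)
  qed
  then show ?thesis
    unfolding blown_up_cube_edges_at[OF assms] by (simp add: card_image card_cartesian_product)
qed

lemma card_blown_up_cube: "2 * card (blown_up_cube g d) = d * 2 ^ d * g ^ 2"
proof -
  have "2 * card (blown_up_cube g d) = (\<Sum>w\<in>{0..<2 ^ d * g}. card {e \<in> blown_up_cube g d. w \<in> e})"
    using sum_degree_eq_twice_card_edges[OF blown_up_cube_simple[OF order.refl]] by simp
  also have "\<dots> = (\<Sum>w\<in>{0..<2 ^ d * g}. d * g)"
    by (rule sum.cong) (simp_all add: card_blown_up_cube_edges_at)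
  finally show ?thesis by (simp add: power2_eq_square)
qed

lemma blown_up_cube_cut_degree:
  "deg_le (cut_edges {w. bit (w div g) i = c} (blown_up_cube g d)) g"
  unfolding deg_le_def
proof
  fix w
  let ?S = "{w. bit (w div g) i = c}"
  let ?cut_at_w = "{e \<in> cut_edges ?S (blown_up_cube g d). w \<in> e}"
  show "card ?cut_at_w \<le> g"
  proof (cases "w < 2 ^ d * g")
    case True
    have "?cut_at_w \<subseteq> (\<lambda>b. {w, flip_bit i (w div g) * g + b}) ` {..<g}"
    proof
      fix e assume e_cut: "e \<in> ?cut_at_w"
      then have "e \<in> {e \<in> blown_up_cube g d. w \<in> e}"
        unfolding cut_edges_def by blast
      then obtain j b where e: "e = {w, flip_bit j (w div g) * g + b}" and "b < g"
        unfolding blown_up_cube_edges_at[OF True] by auto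
      have "w \<in> ?S \<longleftrightarrow> flip_bit j (w div g) * g + b \<notin> ?S"
        using e_cut unfolding e by (simp add: doubleton_in_cut_edges_iff)
      then have "bit (w div g) i \<noteq> bit (flip_bit j (w div g)) i"
        using \<open>b < g\<close> by auto
      then have "j = i" by (auto simp: bit_flip_bit_iff)
      then show "e \<in> (\<lambda>b. {w, flip_bit i (w div g) * g + b}) ` {..<g}"
        using e \<open>b < g\<close> by blast
    qed
    then have "card ?cut_at_w \<le> card ((\<lambda>b. {w, flip_bit i (w div g) * g + b}) ` {..<g})"
      by (intro card_mono) auto
    also have "\<dots> \<le> g"
      using card_image_le[of "{..<g}"] by simp
    finally show ?thesis .
  next
    case False
    have "w \<notin> e" if "e \<in> blown_up_cube g d" for e
      using that False blown_up_cube_simple[OF order.refl, of d g]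
      unfolding simple_graph_def by (fastforce simp: subset_iff)
    then have "?cut_at_w = {}"
      unfolding cut_edges_def by blast
    then show ?thesis by (metis card.empty le0)
  qed
qed

lemma blown_up_cube_certificate_eq:
  assumes "g \<le> f" "2 ^ d * g \<le> n" and cert: "EFD_certificate f {0..<n} (blown_up_cube g d) H"
  shows "H = blown_up_cube g d"
proof (intro equalityI subsetI)
  fix e assume "e \<in> H"
  then show "e \<in> blown_up_cube g d" using cert unfolding EFD_certificate_def by blast
next
  fix e assume e_in: "e \<in> blown_up_cube g d"
  then obtain x a b i where e: "e = {x * g + a, flip_bit i x * g + b}" and "a < g" "b < g"
    unfolding blown_up_cube_def by blast
  define S where "S = {w. bit (w div g) i = bit x i}"
  have "e \<subseteq> {0..<n}"
    using e_in blown_up_cube_simple[OF assms(2)] unfolding simple_graph_def by blast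
  moreover have "x * g + a \<in> S" "flip_bit i x * g + b \<notin> S"
    using \<open>a < g\<close> \<open>b < g\<close> unfolding S_def by (simp_all add: bit_flip_bit_iff)
  moreover have "deg_le (cut_edges S (blown_up_cube g d) - {e}) f"
  proof (rule deg_le_mono)
    show "finite (cut_edges S (blown_up_cube g d))"
      using finite_blown_up_cube unfolding cut_edges_def by simp
    show "deg_le (cut_edges S (blown_up_cube g d)) g"
      unfolding S_def by (rule blown_up_cube_cut_degree)
  qed (use assms(1) in auto)
  ultimately show "e \<in> H"
    using EFD_certificate_contains_edge[OF cert] e_in unfolding e by blast
qed

lemma cube_parameters_large:
  fixes f n :: nat
  assumes "1 \<le> f" "2 * f \<le> n"
  obtains g d where "g \<le> f" "2 ^ d * g \<le> n"
    "real f * real n * ln (real n / real f) \<le> 4 * real (d * 2 ^ d * g ^ 2)"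
proof -
  define m where "m = n div f"
  have "2 \<le> m"
    using div_le_mono[OF assms(2), of f] assms(1) unfolding m_def by simp
  then obtain d where d: "2 ^ d \<le> m" "m < 2 ^ (d + 1)"
    using ex_power_ivl1[of 2 m] by auto
  have "1 \<le> d"
    using d \<open>2 \<le> m\<close> by (cases d) auto
  have "2 ^ d * f \<le> n"
    using mult_le_mono1[OF d(1), of f] div_times_less_eq_dividend[of n f] unfolding m_def
    by linarith
  have "n = m * f + n mod f" "n mod f < f"
    using assms(1) unfolding m_def by simp_all
  then have "n < (m + 1) * f"
    by simp
  also have "\<dots> \<le> 2 ^ (d + 1) * f"
    using d(2) by (intro mult_le_mono1) simp
  finally have "n \<le> 2 ^ (d + 1) * f"
    by simp
  then have n_le: "real n \<le> 2 ^ (d + 1) * real f"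
    using of_nat_mono by fastforce
  have "ln (real n / real f) \<le> ln (2 ^ (d + 1))"
    using n_le assms by (subst ln_le_cancel_iff) (auto simp: field_simps)
  also have "\<dots> = real (d + 1) * ln 2"
    by (subst ln_realpow) simp_all
  also have "\<dots> \<le> real (d + 1)"
    using ln_2_less_1 by (intro mult_left_le) auto
  also have "\<dots> \<le> 2 * real d"
    using \<open>1 \<le> d\<close> by simp
  finally have "ln (real n / real f) \<le> 2 * real d" .
  moreover have "0 \<le> ln (real n / real f)"
    using assms by simp
  ultimately have "real f * real n * ln (real n / real f) \<le> real f * (2 ^ (d + 1) * real f) * (2 * real d)"
    using n_le by (intro mult_mono) auto
  also have "\<dots> = 4 * real (d * 2 ^ d * f ^ 2)"
    by (simp add: power2_eq_square)
  finally show ?thesis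
    using that[OF order.refl \<open>2 ^ d * f \<le> n\<close>] by simp
qed

lemma cube_parameters_small:
  fixes f n :: nat
  assumes "f < n" "n < 2 * f"
  obtains g d where "g \<le> f" "2 ^ d * g \<le> n"
    "real f * real n * ln (real n / real f) \<le> 4 * real (d * 2 ^ d * g ^ 2)"
proof -
  define g where "g = n div 2"
  have "g \<le> f" "2 * g \<le> n" "n \<le> 4 * g"
    using assms unfolding g_def by presburger+
  then have "real n \<le> 4 * real g"
    by linarith
  have "real f * ln (real n / real f) \<le> real f * (real n / real f - 1)"
    using assms by (intro mult_left_mono ln_le_minus_one) auto
  also have "\<dots> = real n - real f"
    using assms by (simp add: field_simps)
  finally have ln_bound: "real f * ln (real n / real f) \<le> real n - real f" .
  have "real f * real n * ln (real n / real f) = real n * (real f * ln (real n / real f))"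
    by simp
  also have "\<dots> \<le> real n * (real n - real f)"
    using ln_bound by (intro mult_left_mono) auto
  also have "\<dots> \<le> real n * (real n / 2)"
    using assms by (intro mult_left_mono) auto
  also have "\<dots> \<le> 4 * real (1 * 2 ^ 1 * g ^ 2)"
  proof -
    have "real n * real n \<le> (4 * real g) * (4 * real g)"
      using \<open>real n \<le> 4 * real g\<close> by (intro mult_mono) auto
    then show ?thesis by (simp add: power2_eq_square)
  qed
  finally show ?thesis
    using that[of g 1] \<open>g \<le> f\<close> \<open>2 * g \<le> n\<close> by simp
qed

theorem mainTheorem2:
  shows "\<exists>c::real. c > 0 \<and>
    (\<forall>n f :: nat. 1 \<le> f \<and> f < n \<longrightarrow>
      (\<exists>E :: nat set set. simple_graph {0..<n} E \<and>
        (\<forall>H. EFD_certificate f {0..<n} E H \<longrightarrow>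
           real (card H) \<ge> c * real f * real n * ln (real n / real f))))"
proof (intro exI[of _ "1 / 8"] conjI allI impI)
  fix n f :: nat
  assume "1 \<le> f \<and> f < n"
  then obtain g d where "g \<le> f" and size: "2 ^ d * g \<le> n"
    and bound: "real f * real n * ln (real n / real f) \<le> 4 * real (d * 2 ^ d * g ^ 2)"
    using cube_parameters_large[of f n] cube_parameters_small[of f n] by (cases "2 * f \<le> n") auto
  show "\<exists>E :: nat set set. simple_graph {0..<n} E \<and>
    (\<forall>H. EFD_certificate f {0..<n} E H \<longrightarrow>
      real (card H) \<ge> 1 / 8 * real f * real n * ln (real n / real f))"
  proof (intro exI[of _ "blown_up_cube g d"] conjI allI impI)
    show "simple_graph {0..<n} (blown_up_cube g d)"
      using size by (rule blown_up_cube_simple)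
    fix H assume "EFD_certificate f {0..<n} (blown_up_cube g d) H"
    then have "H = blown_up_cube g d"
      by (rule blown_up_cube_certificate_eq[OF \<open>g \<le> f\<close> size])
    then have "real (2 * card H) = real (d * 2 ^ d * g ^ 2)"
      by (simp only: card_blown_up_cube)
    then show "real (card H) \<ge> 1 / 8 * real f * real n * ln (real n / real f)"
      using bound by simp
  qed
qed simp

end
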